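(* Let $\Gamma$ be a symmetric, folded, idempotent family of Boolean promise relations such that $\operatorname{AT}_L\notin\operatorname{poly}(\Gamma)$ for some odd positive integer $L$. Then there is a promise relation $(P,Q)$ with $\operatorname{poly}(\Gamma)\subseteq\operatorname{poly}(P,Q)$ of one of the following two forms: either $P=\operatorname{Ham}_k(\{1\})$, $Q=\operatorname{Ham}_k(\{0,1,\dots,k-2,k\})$ for some $k\ge 3$; or $P=\operatorname{Ham}_k(\{0,b\})$, $Q=\operatorname{Ham}_k(\{0,\dots,k-1\})$ for some $k\ge 2$ and $b\in\{1,\dots,k-1\}$.
   Context: Domain $\{0,1\}$. A promise relation is a pair $(P,Q)$ with $P\subseteq Q\subseteq\{0,1\}^k$. $f:\{0,1\}^L\to\{0,1\}$ is a weak polymorphism of $(P,Q)$ if for all $x^{(1)},\dots,x^{(L)}\in P$, $(f(x^{(1)}_1,\dots,x^{(L)}_1),\dots,f(x^{(1)}_k,\dots,x^{(L)}_k))\in Q$; $\operatorname{poly}(\Gamma)$ is the set of functions that are weak polymorphisms of every member of $\Gamma$. $\Gamma$ is symmetric if every relation appearing in it is invariant under coordinate permutations; folded if each $f\in\operatorname{poly}(\Gamma)$ satisfies $f(\bar x)=\neg f(x)$; idempotent if each $f\in\operatorname{poly}(\Gamma)$ satisfies $f(0,\dots,0)=0$, $f(1,\dots,1)=1$. $\operatorname{Ham}_k(S)=\{x\in\{0,1\}^k:|x|\in S\}$ where $|x|$ is the Hamming weight. For odd $L$, $\operatorname{AT}_L(x)=1$ iff $\sum_{i=1}^L(-1)^{i-1}x_i>0$.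 *)

theory Defs
  imports "HOL-Combinatorics.Permutations"
begin

text \<open>Boolean domain {0,1} is represented by bool (False = 0, True = 1).
  A k-tuple is a bool list of length k. An L-ary function is a pair (L, f) with
  L \<ge> 1 and f :: bool list \<Rightarrow> bool (only its values on lists of length L matter).\<close>

type_synonym prel = "nat \<times> bool list set \<times> bool list set"

definition is_prel :: "prel \<Rightarrow> bool" where
  "is_prel R = (case R of (k, P, Q) \<Rightarrow> P \<subseteq> Q \<and> (\<forall>x\<in>Q. length x = k))"

definition weak_poly :: "nat \<Rightarrow> (bool list \<Rightarrow> bool) \<Rightarrow> prel \<Rightarrow> bool" where
  "weak_poly L f R = (case R of (k, P, Q) \<Rightarrow>
     (\<forall>xs. length xs = L \<longrightarrow> set xs \<subseteq> P \<longrightarrow>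
        map (\<lambda>i. f (map (\<lambda>x. x ! i) xs)) [0..<k] \<in> Q))"

definition poly :: "prel set \<Rightarrow> (nat \<times> (bool list \<Rightarrow> bool)) set" where
  "poly \<Gamma> = {(L, f). L \<ge> 1 \<and> (\<forall>R\<in>\<Gamma>. weak_poly L f R)}"

definition symmetric_prel :: "prel \<Rightarrow> bool" where
  "symmetric_prel R = (case R of (k, P, Q) \<Rightarrow>
     (\<forall>\<pi>. \<pi> permutes {..<k} \<longrightarrow>
        (\<forall>x\<in>P. map (\<lambda>i. x ! \<pi> i) [0..<k] \<in> P) \<and>
        (\<forall>x\<in>Q. map (\<lambda>i. x ! \<pi> i) [0..<k] \<in> Q)))"

definition symmetric_fam :: "prel set \<Rightarrow> bool" where
  "symmetric_fam \<Gamma> = (\<forall>R\<in>\<Gamma>. symmetric_prel R)"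

definition folded :: "prel set \<Rightarrow> bool" where
  "folded \<Gamma> = (\<forall>(L, f)\<in>poly \<Gamma>. \<forall>x. length x = L \<longrightarrow> f (map Not x) = (\<not> f x))"

definition idempotent :: "prel set \<Rightarrow> bool" where
  "idempotent \<Gamma> = (\<forall>(L, f)\<in>poly \<Gamma>. f (replicate L False) = False \<and> f (replicate L True) = True)"

definition hweight :: "bool list \<Rightarrow> nat" where
  "hweight x = length (filter id x)"

definition Ham :: "nat \<Rightarrow> nat set \<Rightarrow> bool list set" where
  "Ham k S = {x. length x = k \<and> hweight x \<in> S}"

text \<open>Alternating threshold: AT_L(x) = 1 iff sum_{i=1}^L (-1)^(i-1) x_i > 0
  (0-based index i here, sign (-1)^i).\<close>
definition AT :: "nat \<Rightarrow> bool list \<Rightarrow> bool" where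
  "AT L x = ((\<Sum>i<L. (-1::int) ^ i * (if x ! i then 1 else 0)) > 0)"

end

(*
  By symmetry every relation of \<Gamma> is of the form Ham_k(S) \<rightarrow> Ham_k(T). If AT_L is not a
  weak polymorphism of it, there are L rows with weights in S whose columnwise image has a weight
  t \<notin> T. As L is odd, the alternating column sums add up to the alternating sum of the row
  weights; hence the rows cannot all have one weight on one side of t, and rows of weight 0 or k
  give a constant output. So S contains two weights on the same side of t, or, when 0 < t < k,
  a weight strictly between t and 0 or k. Pinning coordinates to constants (idempotence) and,
  for the weights above t, complementing (folding) cuts out of Ham_k(S) \<rightarrow> Ham_k(T) one of
  the two required relations.
*)

theory Submission
  imports Defs
begin

lemma hweight_Nil [simp]: "hweight [] = 0"
  by (simp add: hweight_def)

lemma hweight_Cons [simp]: "hweight (b # x) = (if b then Suc (hweight x) else hweight x)"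
  by (simp add: hweight_def)

lemma hweight_append [simp]: "hweight (x @ y) = hweight x + hweight y"
  by (simp add: hweight_def)

lemma hweight_replicate [simp]: "hweight (replicate n b) = (if b then n else 0)"
  by (induction n) (auto simp: hweight_def)

lemma hweight_le_length: "hweight x \<le> length x"
  by (simp add: hweight_def)

lemma hweight_map_Not: "hweight (map Not x) = length x - hweight x"
  by (induction x) (auto simp: hweight_def Suc_diff_le)

lemma hweight_eq_0_iff: "hweight x = 0 \<longleftrightarrow> x = replicate (length x) False"
  by (induction x) auto

lemma hweight_eq_length_iff: "hweight x = length x \<longleftrightarrow> x = replicate (length x) True"
proof (induction x)
  case (Cons b x)
  then show ?case using hweight_le_length[of x] by auto
qed simp

lemma hweight_eq_sum: "int (hweight x) = (\<Sum>c<length x. of_bool (x ! c))"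
proof (induction x)
  case (Cons b x)
  have "(\<Sum>c<length (b # x). of_bool ((b # x) ! c)) = of_bool b + (\<Sum>c<length x. of_bool (x ! c) :: int)"
    by (simp only: length_Cons sum.lessThan_Suc_shift nth_Cons_0 nth_Cons_Suc)
  with Cons show ?case by simp
qed simp

lemma Ham_mono: "S \<inter> {..k} \<subseteq> S' \<Longrightarrow> Ham k S \<subseteq> Ham k S'"
  unfolding Ham_def using hweight_le_length by blast

lemma Ham_append_slice:
  "{x. length x = k \<and> x @ w \<in> Ham (k + length w) S} = Ham k {s. s + hweight w \<in> S}"
  by (auto simp: Ham_def)

lemma map_Not_Ham: "map Not ` Ham k S = Ham k ((\<lambda>s. k - s) ` (S \<inter> {..k}))"
proof
  show "map Not ` Ham k S \<subseteq> Ham k ((\<lambda>s. k - s) ` (S \<inter> {..k}))"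
    using hweight_le_length by (auto simp: Ham_def hweight_map_Not)
  show "Ham k ((\<lambda>s. k - s) ` (S \<inter> {..k})) \<subseteq> map Not ` Ham k S"
  proof
    fix y assume "y \<in> Ham k ((\<lambda>s. k - s) ` (S \<inter> {..k}))"
    then obtain s where "length y = k" "hweight y = k - s" "s \<in> S" "s \<le> k"
      by (auto simp: Ham_def)
    then have "map Not y \<in> Ham k S" by (simp add: Ham_def hweight_map_Not)
    moreover have "y = map Not (map Not y)" by (simp add: comp_def)
    ultimately show "y \<in> map Not ` Ham k S" by blast
  qed
qed

lemma count_mset_bool: "count (mset x) b = (if b then hweight x else length x - hweight x)"
  by (induction x) (auto simp: Suc_diff_le hweight_le_length)

lemma mset_eq_if_hweight_eq:
  "length x = length y \<Longrightarrow> hweight x = hweight y \<Longrightarrow> mset x = mset y"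
  by (rule multiset_eqI) (simp add: count_mset_bool)

lemma permutation_closed_eq_Ham:
  assumes len: "\<forall>x\<in>A. length x = k"
    and closed: "\<forall>\<pi>. \<pi> permutes {..<k} \<longrightarrow> (\<forall>x\<in>A. map (\<lambda>i. x ! \<pi> i) [0..<k] \<in> A)"
  shows "A = Ham k (hweight ` A)"
proof
  show "A \<subseteq> Ham k (hweight ` A)" using len by (auto simp: Ham_def)
  show "Ham k (hweight ` A) \<subseteq> A"
  proof
    fix x assume "x \<in> Ham k (hweight ` A)"
    then obtain p where p: "p \<in> A" "length x = k" "hweight x = hweight p"
      by (auto simp: Ham_def)
    then have "mset x = mset p" using len by (intro mset_eq_if_hweight_eq) auto
    then obtain \<pi> where "\<pi> permutes {..<length p}" "permute_list \<pi> p = x"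
      by (rule mset_eq_permutation)
    then show "x \<in> A" using closed p len by (auto simp: permute_list_def)
  qed
qed

lemma symmetric_prel_eq_Ham:
  assumes "is_prel (k, P, Q)" and "symmetric_prel (k, P, Q)"
  shows "P = Ham k (hweight ` P)" and "Q = Ham k (hweight ` Q)"
  using assms by (auto simp: is_prel_def symmetric_prel_def intro!: permutation_closed_eq_Ham)

definition columnwise :: "(bool list \<Rightarrow> bool) \<Rightarrow> nat \<Rightarrow> bool list list \<Rightarrow> bool list" where
  "columnwise f k xs = map (\<lambda>i. f (map (\<lambda>x. x ! i) xs)) [0..<k]"

lemma length_columnwise [simp]: "length (columnwise f k xs) = k"
  by (simp add: columnwise_def)

lemma nth_columnwise [simp]: "c < k \<Longrightarrow> columnwise f k xs ! c = f (map (\<lambda>x. x ! c) xs)"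
  by (simp add: columnwise_def)

lemma weak_poly_iff:
  "weak_poly N f (k, P, Q) \<longleftrightarrow> (\<forall>xs. length xs = N \<longrightarrow> set xs \<subseteq> P \<longrightarrow> columnwise f k xs \<in> Q)"
  by (simp add: weak_poly_def columnwise_def)

lemma columnwise_append_const:
  assumes "\<forall>x\<in>set xs. length x = k" and "\<forall>b. f (replicate (length xs) b) = b"
  shows "columnwise f (k + length w) (map (\<lambda>x. x @ w) xs) = columnwise f k xs @ w"
proof (rule nth_equalityI)
  fix c assume "c < length (columnwise f (k + length w) (map (\<lambda>x. x @ w) xs))"
  then have c: "c < k + length w" by simp
  show "columnwise f (k + length w) (map (\<lambda>x. x @ w) xs) ! c = (columnwise f k xs @ w) ! c"
  proof (cases "c < k")
    case True
    then show ?thesis using c assms(1) by (simp add: nth_append cong: map_cong)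
  next
    case False
    then have "map (\<lambda>x. x ! c) (map (\<lambda>x. x @ w) xs) = replicate (length xs) (w ! (c - k))"
      using assms(1) by (simp add: nth_append map_replicate_const cong: map_cong)
    then show ?thesis using c False assms(2) by (simp add: nth_append del: map_map)
  qed
qed simp

lemma columnwise_map_Not:
  assumes "\<forall>x\<in>set xs. length x = k" and "\<forall>z. length z = length xs \<longrightarrow> f (map Not z) = (\<not> f z)"
  shows "columnwise f k (map (map Not) xs) = map Not (columnwise f k xs)"
proof (rule nth_equalityI)
  fix c assume "c < length (columnwise f k (map (map Not) xs))"
  then have c: "c < k" by simp
  have "map (\<lambda>x. x ! c) (map (map Not) xs) = map Not (map (\<lambda>x. x ! c) xs)"
    using assms(1) c by simp
  then show "columnwise f k (map (map Not) xs) ! c = map Not (columnwise f k xs) ! c"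
    using c assms(2) by (simp del: map_map)
qed simp

lemma columnwise_constant_rows:
  assumes "\<forall>x\<in>set xs. x = replicate k False \<or> x = replicate k True"
  shows "columnwise f k xs = replicate k (f (map (\<lambda>x. x ! 0) xs))"
proof (rule nth_equalityI)
  fix c assume "c < length (columnwise f k xs)"
  then have "c < k" by simp
  then have "map (\<lambda>x. x ! c) xs = map (\<lambda>x. x ! 0) xs"
    using assms by (auto intro!: map_cong)
  with \<open>c < k\<close> show "columnwise f k xs ! c = replicate k (f (map (\<lambda>x. x ! 0) xs)) ! c"
    by (simp only: nth_columnwise nth_replicate)
qed simp

lemma hweight_columnwise_constant_rows:
  assumes "\<forall>x\<in>set xs. length x = k \<and> (hweight x = 0 \<or> hweight x = k)"
  shows "hweight (columnwise f k xs) = 0 \<or> hweight (columnwise f k xs) = k"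
proof -
  have "\<forall>x\<in>set xs. x = replicate k False \<or> x = replicate k True"
    using assms hweight_eq_0_iff hweight_eq_length_iff by metis
  then have "columnwise f k xs = replicate k (f (map (\<lambda>x. x ! 0) xs))"
    by (rule columnwise_constant_rows)
  then show ?thesis by simp
qed

lemma weak_poly_mono:
  assumes "weak_poly N f (k, P, Q)" "P' \<subseteq> P" "Q \<subseteq> Q'"
  shows "weak_poly N f (k, P', Q')"
  using assms by (auto simp: weak_poly_iff)

lemma weak_poly_append_const:
  assumes "weak_poly N f (k + length w, P, Q)" and "\<forall>b. f (replicate N b) = b"
  shows "weak_poly N f (k, {x. length x = k \<and> x @ w \<in> P}, {x. length x = k \<and> x @ w \<in> Q})"
  unfolding weak_poly_iff
proof (intro allI impI)
  fix xs assume xs: "length xs = N" "set xs \<subseteq> {x. length x = k \<and> x @ w \<in> P}"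
  then have "set (map (\<lambda>x. x @ w) xs) \<subseteq> P" by auto
  then have "columnwise f (k + length w) (map (\<lambda>x. x @ w) xs) \<in> Q"
    using assms(1) xs(1) by (simp add: weak_poly_iff)
  moreover have "columnwise f (k + length w) (map (\<lambda>x. x @ w) xs) = columnwise f k xs @ w"
    using xs assms(2) by (intro columnwise_append_const) auto
  ultimately show "columnwise f k xs \<in> {x. length x = k \<and> x @ w \<in> Q}"
    by simp
qed

lemma weak_poly_map_Not:
  assumes "weak_poly N f (k, P, Q)" and "\<forall>x\<in>P. length x = k"
    and "\<forall>z. length z = N \<longrightarrow> f (map Not z) = (\<not> f z)"
  shows "weak_poly N f (k, map Not ` P, map Not ` Q)"
  unfolding weak_poly_iff
proof (intro allI impI)
  fix xs assume xs: "length xs = N" "set xs \<subseteq> map Not ` P"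
  define xs' where "xs' = map (map Not) xs"
  have xs': "set xs' \<subseteq> P" "length xs' = N"
    using xs by (auto simp: xs'_def comp_def)
  have "columnwise f k xs = columnwise f k (map (map Not) xs')"
    by (simp add: xs'_def comp_def)
  also have "\<dots> = map Not (columnwise f k xs')"
    using xs' assms(2,3) by (intro columnwise_map_Not) auto
  finally show "columnwise f k xs \<in> map Not ` Q"
    using xs' assms(1) by (simp add: weak_poly_iff)
qed

lemma poly_subset_singleton_iff:
  "poly \<Gamma> \<subseteq> poly {R} \<longleftrightarrow> (\<forall>(N, f)\<in>poly \<Gamma>. weak_poly N f R)"
  by (auto simp: poly_def)

lemma poly_subset_mono:
  assumes "poly \<Gamma> \<subseteq> poly {(k, P, Q)}" "P' \<subseteq> P" "Q \<subseteq> Q'"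
  shows "poly \<Gamma> \<subseteq> poly {(k, P', Q')}"
  using assms(1) unfolding poly_subset_singleton_iff by (auto intro: weak_poly_mono[OF _ assms(2,3)])

lemma idempotentD: "idempotent \<Gamma> \<Longrightarrow> (N, f) \<in> poly \<Gamma> \<Longrightarrow> f (replicate N b) = b"
  by (cases b) (auto simp: idempotent_def)

lemma foldedD: "folded \<Gamma> \<Longrightarrow> (N, f) \<in> poly \<Gamma> \<Longrightarrow> length z = N \<Longrightarrow> f (map Not z) = (\<not> f z)"
  unfolding folded_def by fast

lemma poly_subset_Ham_shift:
  assumes "idempotent \<Gamma>" and "poly \<Gamma> \<subseteq> poly {(n, Ham n S, Ham n T)}" and "k + a \<le> n"
  shows "poly \<Gamma> \<subseteq> poly {(k, Ham k {s. s + a \<in> S}, Ham k {s. s + a \<in> T})}"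
  unfolding poly_subset_singleton_iff
proof (intro ballI, clarify)
  fix N f assume Nf: "(N, f) \<in> poly \<Gamma>"
  define w where "w = replicate a True @ replicate (n - k - a) False"
  have w: "k + length w = n" "hweight w = a" using assms(3) by (simp_all add: w_def)
  have "weak_poly N f (k + length w, Ham (k + length w) S, Ham (k + length w) T)"
    using assms(2) Nf unfolding w(1) poly_subset_singleton_iff by blast
  moreover have "\<forall>b. f (replicate N b) = b"
    using idempotentD[OF assms(1) Nf] by blast
  ultimately have "weak_poly N f (k, {x. length x = k \<and> x @ w \<in> Ham (k + length w) S},
                                     {x. length x = k \<and> x @ w \<in> Ham (k + length w) T})"
    by (rule weak_poly_append_const)
  then show "weak_poly N f (k, Ham k {s. s + a \<in> S}, Ham k {s. s + a \<in> T})"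
    by (simp only: Ham_append_slice w(2))
qed

lemma poly_subset_Ham_complement:
  assumes "folded \<Gamma>" and "poly \<Gamma> \<subseteq> poly {(k, Ham k S, Ham k T)}"
  shows "poly \<Gamma> \<subseteq> poly {(k, Ham k ((\<lambda>s. k - s) ` (S \<inter> {..k})), Ham k ((\<lambda>s. k - s) ` (T \<inter> {..k})))}"
  unfolding poly_subset_singleton_iff map_Not_Ham[symmetric]
proof (intro ballI, clarify)
  fix N f assume Nf: "(N, f) \<in> poly \<Gamma>"
  have "weak_poly N f (k, Ham k S, Ham k T)"
    using assms(2) Nf unfolding poly_subset_singleton_iff by blast
  moreover have "\<forall>x\<in>Ham k S. length x = k"
    by (simp add: Ham_def)
  moreover have "\<forall>z. length z = N \<longrightarrow> f (map Not z) = (\<not> f z)"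
    using foldedD[OF assms(1) Nf] by blast
  ultimately show "weak_poly N f (k, map Not ` Ham k S, map Not ` Ham k T)"
    by (rule weak_poly_map_Not)
qed

lemma poly_subset_Ham_zero_or_b:
  assumes "idempotent \<Gamma>" and "poly \<Gamma> \<subseteq> poly {(k, Ham k S, Ham k T)}"
    and "s \<in> S" "s' \<in> S" "s < s'" "s' < t" "t \<le> k" "t \<notin> T"
  shows "poly \<Gamma> \<subseteq> poly {(t - s, Ham (t - s) {0, s' - s}, Ham (t - s) {0..t - s - 1})}"
proof -
  have shifted: "poly \<Gamma> \<subseteq> poly {(t - s, Ham (t - s) {u. u + s \<in> S}, Ham (t - s) {u. u + s \<in> T})}"
    using assms by (intro poly_subset_Ham_shift) auto
  have "{0, s' - s} \<subseteq> {u. u + s \<in> S}"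
    using assms by auto
  moreover have "{u. u + s \<in> T} \<inter> {..t - s} \<subseteq> {0..t - s - 1}"
  proof
    fix u assume u: "u \<in> {u. u + s \<in> T} \<inter> {..t - s}"
    then have "u + s \<noteq> t" using assms by auto
    with u show "u \<in> {0..t - s - 1}" by auto
  qed
  ultimately show ?thesis
    by (intro poly_subset_mono[OF shifted] Ham_mono) blast+
qed

lemma poly_subset_Ham_one:
  assumes "idempotent \<Gamma>" and "poly \<Gamma> \<subseteq> poly {(k, Ham k S, Ham k T)}"
    and "s \<in> S" "0 < s" "s < t" "t < k" "t \<notin> T"
  shows "poly \<Gamma> \<subseteq> poly {(t - s + 2, Ham (t - s + 2) {1}, Ham (t - s + 2) ({0..t - s} \<union> {t - s + 2}))}"
proof -
  have shifted: "poly \<Gamma> \<subseteq> poly {(t - s + 2, Ham (t - s + 2) {u. u + (s - 1) \<in> S},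
                                                 Ham (t - s + 2) {u. u + (s - 1) \<in> T})}"
    using assms by (intro poly_subset_Ham_shift) auto
  have "{1} \<subseteq> {u. u + (s - 1) \<in> S}"
    using assms by auto
  moreover have "{u. u + (s - 1) \<in> T} \<inter> {..t - s + 2} \<subseteq> {0..t - s} \<union> {t - s + 2}"
  proof
    fix u assume u: "u \<in> {u. u + (s - 1) \<in> T} \<inter> {..t - s + 2}"
    then have "u + (s - 1) \<noteq> t" using assms by auto
    with u assms show "u \<in> {0..t - s} \<union> {t - s + 2}" by auto
  qed
  ultimately show ?thesis
    by (intro poly_subset_mono[OF shifted] Ham_mono) blast+
qed

lemma sum_alternating_sign: "(\<Sum>j<L. (-1::int) ^ j) = of_bool (odd L)"
  by (induction L) (auto simp: sum.lessThan_Suc)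

lemma AT_column:
  "AT (length xs) (map (\<lambda>x. x ! c) xs) \<longleftrightarrow> 0 < (\<Sum>j<length xs. (-1::int) ^ j * of_bool (xs ! j ! c))"
  by (simp add: AT_def of_bool_def)

lemma sum_alternating_columns:
  assumes "\<forall>x\<in>set xs. length x = k"
  shows "(\<Sum>c<k. \<Sum>j<length xs. (-1::int) ^ j * of_bool (xs ! j ! c))
       = (\<Sum>j<length xs. (-1) ^ j * int (hweight (xs ! j)))"
  using assms by (subst sum.swap) (auto simp: hweight_eq_sum sum_distrib_left intro!: sum.cong)

lemma AT_rows_equal_weight:
  assumes odd: "odd (length xs)" and rows: "\<forall>x\<in>set xs. length x = k \<and> hweight x = s"
  defines "y \<equiv> columnwise (AT (length xs)) k xs"
  shows "0 < s \<Longrightarrow> 0 < hweight y" and "s < k \<Longrightarrow> hweight y < k"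
proof -
  define v where "v c = (\<Sum>j<length xs. (-1::int) ^ j * of_bool (xs ! j ! c))" for c
  have y: "y ! c \<longleftrightarrow> 0 < v c" if "c < k" for c
    using that AT_column by (simp add: y_def v_def)
  have "(\<Sum>c<k. v c) = (\<Sum>j<length xs. (-1) ^ j * int s)"
    unfolding v_def using rows by (subst sum_alternating_columns) (auto intro!: sum.cong)
  also have "\<dots> = int s"
    using odd by (simp add: sum_distrib_right[symmetric] sum_alternating_sign)
  finally have sum_v: "(\<Sum>c<k. v c) = int s" .
  have len_y: "length y = k" by (simp add: y_def)
  show "0 < hweight y" if "0 < s"
  proof (rule ccontr)
    assume "\<not> 0 < hweight y"
    then have "\<not> y ! c" if "c < k" for c
      using that len_y hweight_eq_0_iff[of y] by (metis gr0I nth_replicate)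
    then have "(\<Sum>c<k. v c) \<le> 0" by (intro sum_nonpos) (simp add: y not_less)
    with sum_v \<open>0 < s\<close> show False by simp
  qed
  show "hweight y < k" if "s < k"
  proof (rule ccontr)
    assume "\<not> hweight y < k"
    then have "y ! c" if "c < k" for c
      using that len_y hweight_le_length[of y] hweight_eq_length_iff[of y]
      by (metis le_antisym not_less nth_replicate)
    then have "(\<Sum>c<k. 1) \<le> (\<Sum>c<k. v c)" by (intro sum_mono) (simp add: y int_one_le_iff_zero_less)
    with sum_v \<open>s < k\<close> show False by simp
  qed
qed

lemma AT_weight_gap_cases:
  assumes odd: "odd (length xs)" and rows: "\<forall>x\<in>set xs. length x = k"
    and t: "t = hweight (columnwise (AT (length xs)) k xs)" and t_notin: "t \<notin> hweight ` set xs"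
  defines "W \<equiv> hweight ` set xs"
  shows "(\<exists>s\<in>W. \<exists>s'\<in>W. s < s' \<and> s' < t) \<or> (\<exists>s\<in>W. \<exists>s'\<in>W. t < s \<and> s < s') \<or>
         (\<exists>s\<in>W. 0 < s \<and> s < t \<and> t < k) \<or> (\<exists>s\<in>W. 0 < t \<and> t < s \<and> s < k)"
proof (rule ccontr)
  assume gaps: "\<not> ?thesis"
  have "xs \<noteq> []" using odd by auto
  then obtain x0 where x0: "x0 \<in> set xs" by (meson list.set_sel(1))
  have W_le: "\<forall>s\<in>W. s \<le> k" using rows hweight_le_length by (auto simp: W_def)
  have t_le: "t \<le> k" using t hweight_le_length by (metis length_columnwise)
  have equal_weights: "\<forall>x\<in>set xs. length x = k \<and> hweight x = hweight x0"
    if flat: "\<forall>s\<in>W. \<forall>s'\<in>W. \<not> s < s'"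
  proof
    fix x assume "x \<in> set xs"
    then have "\<not> hweight x < hweight x0" "\<not> hweight x0 < hweight x"
      using flat x0 by (simp_all add: W_def)
    with \<open>x \<in> set xs\<close> rows show "length x = k \<and> hweight x = hweight x0" by simp
  qed
  consider "t = 0" | "t = k" | "0 < t" "t < k"
    using t_le by linarith
  then show False
  proof cases
    case 1
    then have "0 < hweight x0" using t_notin x0 by (metis gr0I image_eqI)
    moreover have "\<forall>s\<in>W. \<forall>s'\<in>W. \<not> s < s'"
      using gaps 1 t_notin by (auto simp: W_def)
    ultimately show False
      using AT_rows_equal_weight(1)[OF odd equal_weights] t 1 by simp
  next
    case 2
    then have "hweight x0 < k" using t_notin x0 W_le by (force simp: W_def le_less)
    moreover have "\<forall>s\<in>W. \<forall>s'\<in>W. \<not> s < s'"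
      using gaps 2 t_notin W_le by (auto simp: W_def le_less)
    ultimately show False
      using AT_rows_equal_weight(2)[OF odd equal_weights] t 2 by simp
  next
    case 3
    have "length x = k \<and> (hweight x = 0 \<or> hweight x = k)" if "x \<in> set xs" for x
    proof -
      have "hweight x \<noteq> t" "hweight x \<le> k"
        using that t_notin W_le by (auto simp: W_def)
      moreover have "\<not> (0 < hweight x \<and> hweight x < t)" "\<not> (t < hweight x \<and> hweight x < k)"
        using gaps 3 that by (auto simp: W_def)
      moreover have "length x = k" using that rows by blast
      ultimately show ?thesis by linarith
    qed
    then have "t = 0 \<or> t = k"
      unfolding t by (intro hweight_columnwise_constant_rows ballI)
    with 3 show False by simp
  qed
qed

lemma exists_Ham_relation_of_gap_below:
  assumes "idempotent \<Gamma>" and target: "poly \<Gamma> \<subseteq> poly {(k, Ham k S, Ham k T)}"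
    and "t \<notin> T" "t \<le> k"
    and "(\<exists>s\<in>S. \<exists>s'\<in>S. s < s' \<and> s' < t) \<or> (\<exists>s\<in>S. 0 < s \<and> s < t \<and> t < k)"
  shows "\<exists>k P Q. poly \<Gamma> \<subseteq> poly {(k, P, Q)} \<and>
           ((k \<ge> 3 \<and> P = Ham k {1} \<and> Q = Ham k ({0..k-2} \<union> {k})) \<or>
            (\<exists>b\<in>{1..k-1}. k \<ge> 2 \<and> P = Ham k {0, b} \<and> Q = Ham k {0..k-1}))"
  using assms(5)
proof
  assume "\<exists>s\<in>S. \<exists>s'\<in>S. s < s' \<and> s' < t"
  then obtain s s' where "s \<in> S" "s' \<in> S" "s < s'" "s' < t" by blast
  with assms have "poly \<Gamma> \<subseteq> poly {(t - s, Ham (t - s) {0, s' - s}, Ham (t - s) {0..t - s - 1})}"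
    by (intro poly_subset_Ham_zero_or_b) auto
  moreover have "s' - s \<in> {1..t - s - 1}" "t - s \<ge> 2"
    using \<open>s < s'\<close> \<open>s' < t\<close> by auto
  ultimately show ?thesis by blast
next
  assume "\<exists>s\<in>S. 0 < s \<and> s < t \<and> t < k"
  then obtain s where "s \<in> S" "0 < s" "s < t" "t < k" by blast
  with assms have "poly \<Gamma> \<subseteq> poly {(t - s + 2, Ham (t - s + 2) {1},
                                        Ham (t - s + 2) ({0..t - s + 2 - 2} \<union> {t - s + 2}))}"
    using poly_subset_Ham_one[of \<Gamma> k S T s t] by simp
  moreover have "t - s + 2 \<ge> 3" using \<open>s < t\<close> by simp
  ultimately show ?thesis by blast
qed

lemma exists_Ham_relation_of_gap:
  assumes "folded \<Gamma>" and "idempotent \<Gamma>" and target: "poly \<Gamma> \<subseteq> poly {(k, Ham k S, Ham k T)}"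
    and S_le: "S \<subseteq> {..k}" and "t \<notin> T" and "t \<le> k"
    and gap: "(\<exists>s\<in>S. \<exists>s'\<in>S. s < s' \<and> s' < t) \<or> (\<exists>s\<in>S. \<exists>s'\<in>S. t < s \<and> s < s') \<or>
              (\<exists>s\<in>S. 0 < s \<and> s < t \<and> t < k) \<or> (\<exists>s\<in>S. 0 < t \<and> t < s \<and> s < k)"
  shows "\<exists>k P Q. poly \<Gamma> \<subseteq> poly {(k, P, Q)} \<and>
           ((k \<ge> 3 \<and> P = Ham k {1} \<and> Q = Ham k ({0..k-2} \<union> {k})) \<or>
            (\<exists>b\<in>{1..k-1}. k \<ge> 2 \<and> P = Ham k {0, b} \<and> Q = Ham k {0..k-1}))"
proof (cases "(\<exists>s\<in>S. \<exists>s'\<in>S. s < s' \<and> s' < t) \<or> (\<exists>s\<in>S. 0 < s \<and> s < t \<and> t < k)")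
  case True
  then show ?thesis
    by (rule exists_Ham_relation_of_gap_below[OF assms(2) target \<open>t \<notin> T\<close> \<open>t \<le> k\<close>])
next
  case False
  \<comment> \<open>complementing turns the gaps above \<open>t\<close> into gaps below \<open>k - t\<close>\<close>
  define S' where "S' = (\<lambda>s. k - s) ` (S \<inter> {..k})"
  define T' where "T' = (\<lambda>s. k - s) ` (T \<inter> {..k})"
  have target': "poly \<Gamma> \<subseteq> poly {(k, Ham k S', Ham k T')}"
    unfolding S'_def T'_def using assms(1) target by (rule poly_subset_Ham_complement)
  have t': "k - t \<notin> T'" "k - t \<le> k"
    using \<open>t \<notin> T\<close> \<open>t \<le> k\<close> by (auto simp: T'_def) (metis diff_diff_cancel)
  have S': "k - s \<in> S'" if "s \<in> S" for s
    using that S_le by (auto simp: S'_def)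
  have "(\<exists>s\<in>S. \<exists>s'\<in>S. t < s \<and> s < s') \<or> (\<exists>s\<in>S. 0 < t \<and> t < s \<and> s < k)"
    using gap False by argo
  then have "(\<exists>s\<in>S'. \<exists>s'\<in>S'. s < s' \<and> s' < k - t) \<or> (\<exists>s\<in>S'. 0 < s \<and> s < k - t \<and> k - t < k)"
  proof (elim disjE bexE conjE)
    fix s s' assume "s \<in> S" "s' \<in> S" "t < s" "s < s'"
    moreover from \<open>s' \<in> S\<close> have "s' \<le> k" using S_le by auto
    ultimately have "k - s' \<in> S'" "k - s \<in> S'" "k - s' < k - s" "k - s < k - t"
      using S' by auto
    then show ?thesis by blast
  next
    fix s assume "s \<in> S" "0 < t" "t < s" "s < k"
    then have "k - s \<in> S'" "0 < k - s" "k - s < k - t" "k - t < k"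
      using S' by auto
    then show ?thesis by blast
  qed
  then show ?thesis
    by (rule exists_Ham_relation_of_gap_below[OF assms(2) target' t'])
qed

theorem lemma4p4:
  fixes \<Gamma> :: "prel set" and L :: nat
  assumes "\<forall>R\<in>\<Gamma>. is_prel R"
    and "symmetric_fam \<Gamma>" and "folded \<Gamma>" and "idempotent \<Gamma>"
    and "odd L" and "(L, AT L) \<notin> poly \<Gamma>"
  shows "\<exists>k P Q. poly \<Gamma> \<subseteq> poly {(k, P, Q)} \<and>
           ((k \<ge> 3 \<and> P = Ham k {1} \<and> Q = Ham k ({0..k-2} \<union> {k})) \<or>
            (\<exists>b\<in>{1..k-1}. k \<ge> 2 \<and> P = Ham k {0, b} \<and> Q = Ham k {0..k-1}))"
proof -
  obtain k P Q where R: "(k, P, Q) \<in> \<Gamma>" "\<not> weak_poly L (AT L) (k, P, Q)"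
    using assms(5,6) odd_pos by (fastforce simp: poly_def)
  then obtain xs where xs: "length xs = L" "set xs \<subseteq> P" "columnwise (AT L) k xs \<notin> Q"
    by (auto simp: weak_poly_iff)
  have rel: "is_prel (k, P, Q)" "symmetric_prel (k, P, Q)"
    using assms(1,2) R(1) by (auto simp: symmetric_fam_def)
  note Ham_eqs = symmetric_prel_eq_Ham[OF rel]
  define W where "W = hweight ` set xs"
  define t where "t = hweight (columnwise (AT L) k xs)"
  have rows: "\<forall>x\<in>set xs. length x = k"
    using xs(2) rel(1) by (auto simp: is_prel_def)
  have "poly \<Gamma> \<subseteq> poly {(k, P, Q)}"
    using R(1) by (auto simp: poly_def)
  moreover have "Ham k W \<subseteq> P"
    using Ham_mono[of W k "hweight ` P"] Ham_eqs(1) xs(2) by (auto simp: W_def)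
  ultimately have target: "poly \<Gamma> \<subseteq> poly {(k, Ham k W, Ham k (hweight ` Q))}"
    using equalityD1[OF Ham_eqs(2)] by (rule poly_subset_mono)
  have "columnwise (AT L) k xs \<notin> Ham k (hweight ` Q)"
    using xs(3) Ham_eqs(2) by blast
  then have t: "t \<notin> hweight ` Q" "t \<le> k"
    using hweight_le_length[of "columnwise (AT L) k xs"] by (auto simp: t_def Ham_def)
  moreover have "t \<notin> W"
    using t(1) xs(2) rel(1) by (auto simp: W_def is_prel_def)
  moreover have "W \<subseteq> {..k}"
    using rows hweight_le_length by (auto simp: W_def)
  ultimately show ?thesis
    using AT_weight_gap_cases[of xs k t, folded W_def] assms(5) xs(1) rows
    by (intro exists_Ham_relation_of_gap[OF assms(3,4) target]) (simp_all add: t_def)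
qed

end
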